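(* Let $t:\Sigma^*\to\Omega^*$ be a rational partial function with suffix-closed domain $X=\mathrm{dom}(t)$, let $B$ be a trim right-subsequential transducer for $t[\mathcal R_t]$, and let $A$ be the right transducer obtained from $B$ by projecting input letters to their first component. If $A$ is not well-behaved, then $X$ contains a linear fooling set for $t$.
   Context: $x\wedge y$: longest common suffix; $\|x,y\|=|x|+|y|-2|x\wedge y|$. $u\mathrel{\mathcal R_t}v$ iff $\{z:uz\in X\}=\{z:vz\in X\}$ and $\{\|t(uw),t(vw)\|:uw,vw\in X\}$ is finite; $\mathcal R_t$ is a finite-index right congruence. For a finite-index right congruence $\mathcal R$, the look-ahead extension is $e_{\mathcal R}(a_1\cdots a_n)=(a_1,[\varepsilon]_{\mathcal R})(a_2,[a_1]_{\mathcal R})\cdots(a_n,[a_1\cdots a_{n-1}]_{\mathcal R})$ over the alphabet $\Sigma\times\Sigma^*/\mathcal R$, and $t[\mathcal R]$ is the partial function with domain $e_{\mathcal R}(X)$ and $t[\mathcal R](e_{\mathcal R}(x))=t(x)$. A real-time right transducer $(Q,\Gamma,\Omega,F,\Delta,I,o)$ has transitions $(q,a,y,p)\in Q\times\Gamma\times\Omega^*\times Q$, read as going from $p$ to $q$ while reading $a$ and outputting $y$; runs read the input from right to left: a run on $a_1\cdots a_n$ from $q_n$ to $q_0$ is $(q_0,a_1,y_1,q_1)\cdots(q_{n-1},a_n,y_n,q_n)$, with output $\mathsf{out}=y_1\cdots y_n$; it is initial if $q_n\in I$, accepting if $q_0\in F$, and then $\mathsf{out}_F=o(q_0)y_1\cdots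 y_n$ where $o:F\to\Omega^*$ is the terminal output; the transducer defines the relation of pairs (input, $\mathsf{out}_F$ of an initial accepting run). It is right-subsequential if $I=\{q_{\mathit{in}}\}$ and it is deterministic when reading right to left (for each state $p$ and letter $a$ at most one transition from $p$ reading $a$); it is trim if every state occurs on some initial accepting run. (By Reutenauer–Schützenberger, $t[\mathcal R_t]$ is right-subsequential.) $A$ has the same states, $F$, $q_{\mathit{in}}$, $o$, and transitions $\{(q,a,y,p):(q,(a,\rho),y,p)\in\Delta_B\}$; it defines $t$ and is unambiguous. Let $q\preceq p$ iff there is a run in $A$ from $p$ to $q$. A word $w$ is guarded by $p$ if there is a run in $A$ on $w$ from $p$ to some $q'$ with $p\preceq q'$; a run from $p$ on $w$ is guarded if $w$ is guarded by $p$. $A$ is well-behaved if for every state $p$ and all guarded runs $\pi,\pi'$ starting in $p$ and ending in $F$ with inputs of equal length, $\mathsf{out}_F(\pi)=\mathsf{out}_F(\pi')$. Linear fooling scheme for $t$: $(u_2,v_2,u,v,Z)$ with $u_2$ a suffix of $u$, $v_2$ a suffix of $v$, $|u_2|=|v_2|$, $\{u_2,v_2\}\{u,v\}^*Z\subseteq X$, and for each $n$ some $z_n\in Z$ with $|z_n|\in O(n)$ and $t(u_2wz_n)\ne t(v_2wz_n)$ for all $w\in\{u,v\}^{\le n}$; $\{u_2,v_2\}\{u,v\}^*Z$ is a linear fooling set. *)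

theory Defs
  imports Main "HOL-Library.Sublist"
begin

definition lcsuffix :: "'a list \<Rightarrow> 'a list \<Rightarrow> 'a list" where
  "lcsuffix x y = rev (longest_common_prefix (rev x) (rev y))"

definition wdist :: "'a list \<Rightarrow> 'a list \<Rightarrow> nat" where
  "wdist x y = length x + length y - 2 * length (lcsuffix x y)"

definition suffix_closed :: "'a list set \<Rightarrow> bool" where
  "suffix_closed X \<longleftrightarrow> (\<forall>x y. suffix y x \<and> x \<in> X \<longrightarrow> y \<in> X)"

inductive gpath :: "('q \<times> 'a list \<times> 'b list \<times> 'q) set \<Rightarrow> 'q \<Rightarrow> 'a list \<Rightarrow> 'b list \<Rightarrow> 'q \<Rightarrow> bool"
  for D where
  gnil: "gpath D p [] [] p"
| gstep: "(p, u, v, p') \<in> D \<Longrightarrow> gpath D p' x z q \<Longrightarrow> gpath D p (u @ x) (v @ z) q"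

definition rational_pfun :: "('a list \<Rightarrow> 'b list option) \<Rightarrow> bool" where
  "rational_pfun t \<longleftrightarrow>
     (\<exists>(Q::nat set) D I F. finite Q \<and> finite D \<and> D \<subseteq> Q \<times> UNIV \<times> UNIV \<times> Q \<and> I \<subseteq> Q \<and> F \<subseteq> Q \<and>
        (\<forall>x z. t x = Some z \<longleftrightarrow> (\<exists>p q. p \<in> I \<and> q \<in> F \<and> gpath D p x z q)))"

definition Rt :: "('a list \<Rightarrow> 'b list option) \<Rightarrow> 'a list \<Rightarrow> 'a list \<Rightarrow> bool" where
  "Rt t u v \<longleftrightarrow>
     {z. u @ z \<in> dom t} = {z. v @ z \<in> dom t} \<and>
     finite {wdist (the (t (u @ w))) (the (t (v @ w))) | w. u @ w \<in> dom t \<and> v @ w \<in> dom t}"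

definition rclass :: "('a list \<Rightarrow> 'a list \<Rightarrow> bool) \<Rightarrow> 'a list \<Rightarrow> 'a list set" where
  "rclass R u = {v. R u v}"

definition classes :: "('a list \<Rightarrow> 'a list \<Rightarrow> bool) \<Rightarrow> 'a list set set" where
  "classes R = {rclass R u | u. True}"

definition lookahead_ext :: "('a list \<Rightarrow> 'a list \<Rightarrow> bool) \<Rightarrow> 'a list \<Rightarrow> ('a \<times> 'a list set) list" where
  "lookahead_ext R x = map (\<lambda>i. (x ! i, rclass R (take i x))) [0..<length x]"

definition ext_fun :: "('a list \<Rightarrow> 'a list \<Rightarrow> bool) \<Rightarrow> ('a list \<Rightarrow> 'b list option)
    \<Rightarrow> ('a \<times> 'a list set) list \<Rightarrow> 'b list option" where
  "ext_fun R t w = (if \<exists>x \<in> dom t. lookahead_ext R x = w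
                    then t (THE x. x \<in> dom t \<and> lookahead_ext R x = w) else None)"

record ('q, 'c, 'b) rtt =
  st :: "'q set"
  trans :: "('q \<times> 'c \<times> 'b list \<times> 'q) set"
  init :: "'q set"
  fin :: "'q set"
  tout :: "'q \<Rightarrow> 'b list"

text \<open>rrun D p w q y: a run on w from p to q (input read right to left) with output y.
  A run on a1...an from qn to q0 is (q0,a1,y1,q1)...(q(n-1),an,yn,qn), output y1...yn.\<close>
inductive rrun :: "('q \<times> 'c \<times> 'b list \<times> 'q) set \<Rightarrow> 'q \<Rightarrow> 'c list \<Rightarrow> 'q \<Rightarrow> 'b list \<Rightarrow> bool"
  for D where
  rnil: "rrun D p [] p []"
| rcons: "(q, a, y, q1) \<in> D \<Longrightarrow> rrun D p w q1 y' \<Longrightarrow> rrun D p (a # w) q (y @ y')"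

definition rtt_wf :: "('q, 'c, 'b) rtt \<Rightarrow> 'c set \<Rightarrow> bool" where
  "rtt_wf T \<Gamma> \<longleftrightarrow> finite (st T) \<and> finite \<Gamma> \<and> finite (trans T) \<and>
     trans T \<subseteq> st T \<times> \<Gamma> \<times> UNIV \<times> st T \<and> init T \<subseteq> st T \<and> fin T \<subseteq> st T"

definition rtt_rel :: "('q, 'c, 'b) rtt \<Rightarrow> ('c list \<times> 'b list) set" where
  "rtt_rel T = {(x, z). \<exists>p q y. p \<in> init T \<and> rrun (trans T) p x q y \<and> q \<in> fin T \<and> z = tout T q @ y}"

definition rtt_defines :: "('q, 'c, 'b) rtt \<Rightarrow> ('c list \<Rightarrow> 'b list option) \<Rightarrow> bool" where
  "rtt_defines T f \<longleftrightarrow> rtt_rel T = {(x, z). f x = Some z}"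

definition right_subsequential :: "('q, 'c, 'b) rtt \<Rightarrow> bool" where
  "right_subsequential T \<longleftrightarrow> (\<exists>q. init T = {q}) \<and>
     (\<forall>p a q y q' y'. (q, a, y, p) \<in> trans T \<and> (q', a, y', p) \<in> trans T \<longrightarrow> q = q' \<and> y = y')"

definition trim :: "('q, 'c, 'b) rtt \<Rightarrow> bool" where
  "trim T \<longleftrightarrow> (\<forall>s \<in> st T. \<exists>p x1 x2 q y1 y2. p \<in> init T \<and> rrun (trans T) p x2 s y2 \<and>
                                  rrun (trans T) s x1 q y1 \<and> q \<in> fin T)"

definition project :: "('q, 'a \<times> 'r, 'b) rtt \<Rightarrow> ('q, 'a, 'b) rtt" where
  "project B = \<lparr> st = st B, trans = {(q, a, y, p) | q a r y p. (q, (a, r), y, p) \<in> trans B},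
                 init = init B, fin = fin B, tout = tout B \<rparr>"

definition below :: "('q, 'c, 'b) rtt \<Rightarrow> 'q \<Rightarrow> 'q \<Rightarrow> bool" where
  "below T q p \<longleftrightarrow> (\<exists>w y. rrun (trans T) p w q y)"

definition guarded :: "('q, 'c, 'b) rtt \<Rightarrow> 'q \<Rightarrow> 'c list \<Rightarrow> bool" where
  "guarded T p w \<longleftrightarrow> (\<exists>q' y. rrun (trans T) p w q' y \<and> below T p q')"

definition well_behaved :: "('q, 'c, 'b) rtt \<Rightarrow> bool" where
  "well_behaved T \<longleftrightarrow>
     (\<forall>p \<in> st T. \<forall>w w' q q' y y'.
        guarded T p w \<and> guarded T p w' \<and> rrun (trans T) p w q y \<and> rrun (trans T) p w' q' y' \<and>
        q \<in> fin T \<and> q' \<in> fin T \<and> length w = length w' \<longrightarrow> tout T q @ y = tout T q' @ y')"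

definition star_of :: "'a list set \<Rightarrow> 'a list set" where
  "star_of L = {concat ws | ws. set ws \<subseteq> L}"

definition upto_pow :: "'a list set \<Rightarrow> nat \<Rightarrow> 'a list set" where
  "upto_pow L n = {concat ws | ws. set ws \<subseteq> L \<and> length ws \<le> n}"

definition linear_fooling_scheme ::
  "('a list \<Rightarrow> 'b list option) \<Rightarrow> 'a list \<Rightarrow> 'a list \<Rightarrow> 'a list \<Rightarrow> 'a list \<Rightarrow> 'a list set \<Rightarrow> bool" where
  "linear_fooling_scheme t u2 v2 u v Z \<longleftrightarrow>
     suffix u2 u \<and> suffix v2 v \<and> length u2 = length v2 \<and>
     {x @ w @ z | x w z. x \<in> {u2, v2} \<and> w \<in> star_of {u, v} \<and> z \<in> Z} \<subseteq> dom t \<and>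
     (\<exists>zs :: nat \<Rightarrow> 'a list. (\<forall>n. zs n \<in> Z) \<and>
        (\<exists>C::nat. \<forall>n. length (zs n) \<le> C * n + C) \<and>
        (\<forall>n. \<forall>w \<in> upto_pow {u, v} n. t (u2 @ w @ zs n) \<noteq> t (v2 @ w @ zs n)))"

definition has_linear_fooling_set :: "('a list \<Rightarrow> 'b list option) \<Rightarrow> bool" where
  "has_linear_fooling_set t \<longleftrightarrow> (\<exists>u2 v2 u v Z. linear_fooling_scheme t u2 v2 u v Z)"

end

theory Submission
  imports Defs
begin

text \<open>A failure of well-behavedness yields a state p and guarded inputs w, w' of equal length
  whose runs from p end in final states with different outputs. Guardedness closes w and w'
  into cycles vw and v'w' at p, and trimness gives an input z leading from the initial state
  to p. Every m in {vw, v'w'}^* then reads as a cycle at p, so wmz and w'mz are both in the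
  domain, and their images differ exactly in the terminal output plus the output produced
  while reading w resp. w'.
  Hence the constant family z_n = z witnesses a linear fooling scheme.\<close>

lemma rrun_append:
  assumes "rrun D q1 v q y'" and "rrun D p w q1 y"
  shows "rrun D p (v @ w) q (y' @ y)"
  using assms
proof (induction rule: rrun.induct)
  case rnil
  then show ?case by simp
next
  case (rcons q a ya q2 s v y'')
  then show ?case using rrun.rcons[of q a ya q2 D p "v @ w" "y'' @ y"] by simp
qed

lemma rrun_star_of_cycles:
  assumes "m \<in> star_of L" and "\<And>u. u \<in> L \<Longrightarrow> \<exists>y. rrun D p u p y"
  shows "\<exists>y. rrun D p m p y"
proof -
  obtain ws where m: "m = concat ws" and ws: "set ws \<subseteq> L"
    using assms(1) unfolding star_of_def by blast
  from ws have "\<exists>y. rrun D p (concat ws) p y"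
  proof (induction ws)
    case Nil
    then show ?case using rrun.rnil by fastforce
  next
    case (Cons u ws)
    then obtain y yu where "rrun D p (concat ws) p y" and "rrun D p u p yu"
      using assms(2) by fastforce
    then show ?case using rrun_append by fastforce
  qed
  then show ?thesis using m by simp
qed

lemma upto_pow_subset_star_of: "upto_pow L n \<subseteq> star_of L"
  unfolding upto_pow_def star_of_def by blast

lemma guarded_imp_cycle:
  assumes "guarded T p w"
  shows "\<exists>v y. rrun (trans T) p (v @ w) p y"
  using assms rrun_append unfolding guarded_def below_def by metis

lemma rrun_project_iff:
  "rrun (trans (project B)) p x q y \<longleftrightarrow> (\<exists>\<omega>. map fst \<omega> = x \<and> rrun (trans B) p \<omega> q y)"
proof
  assume "rrun (trans (project B)) p x q y"
  then show "\<exists>\<omega>. map fst \<omega> = x \<and> rrun (trans B) p \<omega> q y"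
  proof (induction rule: rrun.induct)
    case rnil
    then show ?case using rrun.rnil by fastforce
  next
    case (rcons q a ya q1 s w y')
    then obtain \<omega> r where "map fst \<omega> = w" "rrun (trans B) s \<omega> q1 y'"
      and "(q, (a, r), ya, q1) \<in> trans B"
      by (auto simp: project_def)
    then show ?case using rrun.rcons by (metis list.simps(9) fst_conv)
  qed
next
  assume "\<exists>\<omega>. map fst \<omega> = x \<and> rrun (trans B) p \<omega> q y"
  then obtain \<omega> where "rrun (trans B) p \<omega> q y" and x: "x = map fst \<omega>" by blast
  then show "rrun (trans (project B)) p x q y"
  proof (induction arbitrary: x rule: rrun.induct)
    case rnil
    then show ?case by (simp add: rrun.rnil)
  next
    case (rcons q c ya q1 s w y')
    then have "(q, fst c, ya, q1) \<in> trans (project B)"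
      by (cases c) (auto simp: project_def)
    then show ?case using rcons by (simp add: rrun.rcons)
  qed
qed

lemma trim_project: "trim B \<Longrightarrow> trim (project B)"
  unfolding trim_def rrun_project_iff by (simp add: project_def) blast

lemma map_fst_lookahead_ext: "map fst (lookahead_ext R x) = x"
  unfolding lookahead_ext_def by (simp add: comp_def map_nth)

lemma ext_fun_SomeD:
  assumes "ext_fun R t \<omega> = Some z"
  shows "t (map fst \<omega>) = Some z"
proof -
  obtain x where x: "x \<in> dom t" "lookahead_ext R x = \<omega>"
    using assms unfolding ext_fun_def by (auto split: if_splits)
  have x_eq: "x = map fst \<omega>"
    using x(2) map_fst_lookahead_ext by metis
  have "(THE x. x \<in> dom t \<and> lookahead_ext R x = \<omega>) = x"
    using x map_fst_lookahead_ext by (metis (mono_tags, lifting) the_equality)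
  then have "ext_fun R t \<omega> = t x"
    using x unfolding ext_fun_def by auto
  then show ?thesis using assms x_eq by simp
qed

lemma rtt_rel_project_subset:
  assumes "rtt_defines B (ext_fun R t)"
  shows "rtt_rel (project B) \<subseteq> {(x, z). t x = Some z}"
proof safe
  fix x z
  assume "(x, z) \<in> rtt_rel (project B)"
  then obtain \<omega> where "map fst \<omega> = x" and "(\<omega>, z) \<in> rtt_rel B"
    unfolding rtt_rel_def rrun_project_iff by (auto simp: project_def)
  then show "t x = Some z"
    using assms ext_fun_SomeD unfolding rtt_defines_def by fastforce
qed

lemma linear_fooling_scheme_from_cycles:
  assumes sound: "rtt_rel T \<subseteq> {(x, z). t x = Some z}"
    and p0: "p0 \<in> init T" and reach: "rrun (trans T) p0 z p y0"
    and cycle_u: "rrun (trans T) p u p yu" and cycle_v: "rrun (trans T) p v p yv"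
    and "suffix u2 u" "suffix v2 v" "length u2 = length v2"
    and run_u2: "rrun (trans T) p u2 q y" and q: "q \<in> fin T"
    and run_v2: "rrun (trans T) p v2 q' y'" and q': "q' \<in> fin T"
    and differ: "tout T q @ y \<noteq> tout T q' @ y'"
  shows "linear_fooling_scheme t u2 v2 u v {z}"
proof -
  have accept: "t x = Some (tout T q @ y)" if "rrun (trans T) p0 x q y" "q \<in> fin T" for x q y
    using subsetD[OF sound, of "(x, tout T q @ y)"] p0 that unfolding rtt_rel_def by blast
  have image: "t (u2 @ m @ z) = Some (tout T q @ y @ ym @ y0)"
    "t (v2 @ m @ z) = Some (tout T q' @ y' @ ym @ y0)"
    if "rrun (trans T) p m p ym" for m ym
  proof -
    have "rrun (trans T) p0 (m @ z) p (ym @ y0)"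
      using that reach by (rule rrun_append)
    then have "rrun (trans T) p0 (u2 @ m @ z) q (y @ ym @ y0)"
      and "rrun (trans T) p0 (v2 @ m @ z) q' (y' @ ym @ y0)"
      using rrun_append[OF run_u2] rrun_append[OF run_v2] by auto
    then show "t (u2 @ m @ z) = Some (tout T q @ y @ ym @ y0)"
      "t (v2 @ m @ z) = Some (tout T q' @ y' @ ym @ y0)"
      using accept q q' by auto
  qed
  have cycle: "\<exists>ym. rrun (trans T) p m p ym" if "m \<in> star_of {u, v}" for m
    using that by (rule rrun_star_of_cycles) (use cycle_u cycle_v in blast)
  have "{x @ m @ z' | x m z'. x \<in> {u2, v2} \<and> m \<in> star_of {u, v} \<and> z' \<in> {z}} \<subseteq> dom t"
    using cycle image by blast
  moreover have "t (u2 @ m @ z) \<noteq> t (v2 @ m @ z)" if "m \<in> upto_pow {u, v} n" for m n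
    using that upto_pow_subset_star_of cycle image differ by fastforce
  ultimately show ?thesis
    using assms unfolding linear_fooling_scheme_def
    by (intro conjI exI[of _ "\<lambda>_. z"] exI[of _ "length z"]) auto
qed

theorem proposition23:
  fixes t :: "('a::finite) list \<Rightarrow> 'b list option"
    and B :: "('q, 'a \<times> 'a list set, 'b) rtt"
  assumes "rational_pfun t"
    and "suffix_closed (dom t)"
    and "rtt_wf B (UNIV \<times> classes (Rt t))"
    and "right_subsequential B"
    and "trim B"
    and "rtt_defines B (ext_fun (Rt t) t)"
    and "\<not> well_behaved (project B)"
  shows "has_linear_fooling_set t"
proof -
  let ?A = "project B"
  obtain p w w' q q' y y' where p: "p \<in> st ?A"
    and guarded: "guarded ?A p w" "guarded ?A p w'" and "length w = length w'"
    and "rrun (trans ?A) p w q y" "q \<in> fin ?A" "rrun (trans ?A) p w' q' y'" "q' \<in> fin ?A"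
    and "tout ?A q @ y \<noteq> tout ?A q' @ y'"
    using assms(7) unfolding well_behaved_def by blast
  moreover obtain v yv v' yv' where
    "rrun (trans ?A) p (v @ w) p yv" "rrun (trans ?A) p (v' @ w') p yv'"
    using guarded_imp_cycle guarded by metis
  moreover obtain p0 z y0 where "p0 \<in> init ?A" "rrun (trans ?A) p0 z p y0"
    using trim_project[OF assms(5)] p unfolding trim_def by blast
  ultimately have "linear_fooling_scheme t w w' (v @ w) (v' @ w') {z}"
    by (intro linear_fooling_scheme_from_cycles[OF rtt_rel_project_subset[OF assms(6)]])
      (auto intro: suffixI)
  then show ?thesis unfolding has_linear_fooling_set_def by blast
qed

end
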